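(* Let $\{\tau_n\}\subset\mathscr{M}_{\mathbb{R}^d}^{\mathbf{0}}$ satisfy conditions (I) and (II) (equivalently, (III) and (IV)), and let $\tau$ be the measure in (III). Put $\rho_n=\tau_nW^{-1}$ and $\rho=1_{\mathbb{T}^d\setminus\{\mathbf{1}\}}(\tau W^{-1})$. Then $\{\rho_n\}$ satisfies conditions (iii) and (iv) with limit measure $\rho$ in (iii) (and hence also conditions (i) and (ii)). Moreover, $\tau_n$ and $\rho_n$ determine the same quadratic form on $\mathbb{Z}^d$; in particular the matrix $\mathbf{A}$ with $Q(\boldsymbol u)=\langle\mathbf{A}\boldsymbol u,\boldsymbol u\rangle$ in (IV) coincides with the one representing $Q$ in (iv).
   Context: $W:\mathbb{R}^d\to\mathbb{T}^d$, $W(\boldsymbol x)=e^{i\boldsymbol x}=(e^{ix_1},\dots,e^{ix_d})$; $\tau W^{-1}$ is the push-forward. $\mathscr{M}_{\mathbb{R}^d}^{\mathbf{0}}$ (resp. $\mathscr{M}_{\mathbb{T}^d}^{\mathbf{1}}$): positive Borel measures finite on Borel sets bounded away from $\mathbf{0}$ (resp. $\mathbf{1}$); $\mathscr{M}_{\mathbf{X}}$: finite positive Borel measures; $\tau_n\Rightarrow_{\mathbf{0}}\tau$ means $\int f\,d\tau_n\to\int f\,d\tau$ for bounded continuous $f$ with support bounded away from $\mathbf{0}$ (similarly $\Rightarrow_{\mathbf{1}}$). $\mathscr{V}_\epsilon=\{\boldsymbol x\in\mathbb{R}^d:\|\boldsymbol x\|<\epsilon\}$, $\mathscr{U}_\epsilon=\{\boldsymbol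 s\in\mathbb{T}^d:\|\arg\boldsymbol s\|<\epsilon\}$ with $\arg\in(-\pi,\pi]$ componentwise. Conditions on $\{\tau_n\}$: (I) for each $j$, $d\sigma_{nj}=\frac{x_j^2}{1+x_j^2}d\tau_n$ is finite and converges weakly to some finite $\sigma_j$; (II) $\lim_n\int\frac{x_jx_\ell}{(1+x_j^2)(1+x_\ell^2)}d\tau_n$ exists in $\mathbb{R}$ for all $j,\ell$; (III) there is $\tau\in\mathscr{M}_{\mathbb{R}^d}^{\mathbf{0}}$ with $\tau(\{\mathbf{0}\})=0$ and $\tau_n\Rightarrow_{\mathbf{0}}\tau$; (IV) for every $\boldsymbol u\in\mathbb{R}^d$, $\lim_{\epsilon\to0}\limsup_n\int_{\mathscr{V}_\epsilon}\langle\boldsymbol u,\boldsymbol x\rangle^2d\tau_n=\lim_{\epsilon\to0}\liminf_n\int_{\mathscr{V}_\epsilon}\langle\boldsymbol u,\boldsymbol x\rangle^2d\tau_n=:Q(\boldsymbol u)\in\mathbb{R}$ (then $Q(\boldsymbol u)=\langle\mathbf{A}\boldsymbol u,\boldsymbol u\rangle$ for a positive semi-definite $\mathbf{A}$). Conditions on $\{\rho_n\}\subset\mathscr{M}_{\mathbb{T}^d}^{\mathbf{1}}$: (i) $d\lambda_{nj}=(1-\Re s_j)d\rho_n$ is finite and converges weakly to a finite $\lambda_j$; (ii) $\lim_n\int(\Im s_j)(\Im s_\ell)d\rho_n$ exists in $\mathbb{R}$; (iii) there is $\rho\in\mathscr{M}_{\mathbb{T}^d}^{\mathbf{1}}$ with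 $\rho(\{\mathbf{1}\})=0$ and $\rho_n\Rightarrow_{\mathbf{1}}\rho$; (iv) for every $\boldsymbol p\in\mathbb{Z}^d$, $\lim_{\epsilon\to0}\limsup_n\int_{\mathscr{U}_\epsilon}\langle\boldsymbol p,\Im\boldsymbol s\rangle^2d\rho_n=\lim_{\epsilon\to0}\liminf_n\int_{\mathscr{U}_\epsilon}\langle\boldsymbol p,\Im\boldsymbol s\rangle^2d\rho_n=:Q(\boldsymbol p)\in\mathbb{R}$. *)

theory Defs
  imports "HOL-Probability.Probability"
begin

definition torus :: "(complex^'d) set" where
  "torus = {s. \<forall>j. norm (s$j) = 1}"

definition one_t :: "complex^'d" where
  "one_t = (\<chi> j. 1)"

definition Wmap :: "real^'d \<Rightarrow> complex^'d" where
  "Wmap x = (\<chi> j. exp (\<i> * complex_of_real (x$j)))"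

definition arg_vec :: "complex^'d \<Rightarrow> real^'d" where
  "arg_vec s = (\<chi> j. Arg (s$j))"

definition Im_vec :: "complex^'d \<Rightarrow> real^'d" where
  "Im_vec s = (\<chi> j. Im (s$j))"

definition bounded_away :: "'a::metric_space set \<Rightarrow> 'a \<Rightarrow> bool" where
  "bounded_away A c \<longleftrightarrow> (\<exists>\<epsilon>>0. \<forall>x\<in>A. \<epsilon> \<le> dist x c)"

text \<open>Positive Borel measures on S (a Borel subset of a metric space) that are
  finite on Borel sets bounded away from c: the classes M^0_{R^d} and M^1_{T^d}.\<close>

definition M_away :: "'a::metric_space set \<Rightarrow> 'a \<Rightarrow> 'a measure \<Rightarrow> bool" where
  "M_away S c M \<longleftrightarrow> sets M = sets (restrict_space borel S) \<and>
     (\<forall>A\<in>sets M. bounded_away A c \<longrightarrow> emeasure M A < \<infinity>)"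

text \<open>Convergence "=>_c": integrals of bounded continuous real functions on S whose
  support is bounded away from c (i.e. which vanish near c) converge.\<close>

definition weak_conv_away ::
  "'a::metric_space set \<Rightarrow> 'a \<Rightarrow> (nat \<Rightarrow> 'a measure) \<Rightarrow> 'a measure \<Rightarrow> bool" where
  "weak_conv_away S c Ms M \<longleftrightarrow>
     (\<forall>f::'a \<Rightarrow> real. continuous_on S f \<longrightarrow> bounded (f ` S) \<longrightarrow>
        (\<exists>\<epsilon>>0. \<forall>x\<in>S. dist x c < \<epsilon> \<longrightarrow> f x = 0) \<longrightarrow>
        (\<lambda>n. \<integral>x. f x \<partial>Ms n) \<longlonglongrightarrow> (\<integral>x. f x \<partial>M))"

text \<open>The quadratic-form condition (IV)/(iv): with neighbourhoods U eps of the base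
  point, lim_{eps->0} limsup_n int_{U eps} g d(Ms n) =
  lim_{eps->0} liminf_n int_{U eps} g d(Ms n) = q, a (necessarily nonnegative) real.\<close>

definition quad_limit ::
  "('a \<Rightarrow> real) \<Rightarrow> (real \<Rightarrow> 'a set) \<Rightarrow> (nat \<Rightarrow> 'a measure) \<Rightarrow> real \<Rightarrow> bool" where
  "quad_limit g U Ms q \<longleftrightarrow> 0 \<le> q \<and>
     ((\<lambda>\<epsilon>. limsup (\<lambda>n. \<integral>\<^sup>+x\<in>U \<epsilon>. ennreal (g x) \<partial>Ms n)) \<longlongrightarrow> ennreal q) (at_right 0) \<and>
     ((\<lambda>\<epsilon>. liminf (\<lambda>n. \<integral>\<^sup>+x\<in>U \<epsilon>. ennreal (g x) \<partial>Ms n)) \<longlongrightarrow> ennreal q) (at_right 0)"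

end

theory Submission
  imports Defs
begin

(* The map W satisfies dist (W x) 1 <= |x|, so preimages under W of sets bounded away from 1
   are bounded away from 0. This transports the finiteness of the measures and the convergence
   away from the base point (test functions on the torus compose with W); the density
   1_{T^d - {1}} only removes an atom at 1, which such test functions do not see.

   For the quadratic form, Im W(x) = sin x and arg W(x) = x near 0, so on the eps-ball
   (p . Im W(x))^2 differs from (p . x)^2 by at most 2 |p|^2 eps |x|^2. The preimage of the
   eps-neighbourhood of 1 also contains small neighbourhoods of the points of 2 pi Z^d - {0};
   there |p . Im W(x)| <= |p| |arg W(x)| < |p| eps, and these points have |x| >= pi, a region
   whose tau_n-mass is eventually bounded because tau_n converges away from 0. Hence the two
   truncated integrals differ by eps times a bound uniform in n, and their limsup/liminf limits
   agree. *)

section \<open>The exponential map onto the torus\<close>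

lemma Wmap_in_torus: "Wmap x \<in> torus"
  by (simp add: Wmap_def torus_def)

lemma one_t_in_torus: "one_t \<in> torus"
  by (simp add: one_t_def torus_def)

lemma closed_torus: "closed (torus :: (complex^'d) set)"
proof -
  have "(torus :: (complex^'d) set) = (\<Inter>j. {s. norm (s $ j) = 1})"
    by (auto simp: torus_def)
  moreover have "closed (\<Inter>j. {s::complex^'d. norm (s $ j) = 1})"
    by (intro closed_INT ballI closed_Collect_eq continuous_intros)
  ultimately show ?thesis
    by simp
qed

lemma continuous_on_Wmap: "continuous_on UNIV Wmap"
  unfolding Wmap_def by (intro continuous_on_vec_lambda continuous_intros)

lemma Wmap_measurable: "Wmap \<in> borel \<rightarrow>\<^sub>M restrict_space borel torus"
  by (intro measurable_restrict_space2 borel_measurable_continuous_onI continuous_on_Wmap)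
    (simp add: Wmap_in_torus)

lemma borel_measurable_Wmap [measurable]: "Wmap \<in> borel_measurable borel"
  by (intro borel_measurable_continuous_onI continuous_on_Wmap)

lemma norm_exp_i_minus_1_le: "norm (exp (\<i> * of_real t) - 1) \<le> \<bar>t\<bar>"
  using abs_sin_x_le_abs_x[of "t / 2"] by (simp add: dist_exp_i_1)

lemma dist_Wmap_one_t_le: "dist (Wmap x) one_t \<le> norm x"
proof -
  have "dist (Wmap x) one_t = L2_set (\<lambda>j. norm (exp (\<i> * of_real (x $ j)) - 1)) UNIV"
    by (simp add: dist_vec_def Wmap_def one_t_def dist_norm)
  also have "\<dots> \<le> L2_set (\<lambda>j. \<bar>x $ j\<bar>) UNIV"
    by (intro L2_set_mono norm_exp_i_minus_1_le) simp
  finally show ?thesis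
    by (simp add: norm_vec_def)
qed

lemma borel_measurable_Arg: "Arg \<in> borel_measurable borel"
proof -
  have "(\<lambda>z. if z \<in> - \<real>\<^sub>\<le>\<^sub>0 then Arg z else pi) \<in> borel_measurable borel"
    using closed_nonpos_Reals_complex
    by (intro borel_measurable_continuous_on_if)
      (auto intro!: continuous_at_imp_continuous_on continuous_at_Arg)
  then show ?thesis
    by (rule measurable_discrete_difference[where X="{0}"])
      (auto simp: Arg_real elim!: nonpos_Reals_cases)
qed

lemma borel_measurable_norm_arg_vec: "(\<lambda>s::complex^'d. norm (arg_vec s)) \<in> borel_measurable borel"
proof -
  have [measurable]: "(\<lambda>s::complex^'d. Arg (s $ j)) \<in> borel_measurable borel" for j
    by (rule measurable_compose[OF _ borel_measurable_Arg])
      (intro borel_measurable_continuous_onI continuous_intros)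
  show ?thesis
    unfolding norm_vec_def L2_set_def arg_vec_def by simp
qed

lemma torus_in_borel [measurable]: "torus \<in> sets borel"
  by (rule borel_closed[OF closed_torus])

lemma torus_arg_vec_ball_in_borel [measurable]: "{s\<in>torus. norm (arg_vec s) < \<epsilon>} \<in> sets borel"
  using borel_measurable_norm_arg_vec by measurable

lemma borel_measurable_Im_vec [measurable]: "Im_vec \<in> borel_measurable borel"
  unfolding Im_vec_def by (intro borel_measurable_continuous_onI continuous_on_vec_lambda continuous_intros)

lemma arg_vec_Wmap:
  assumes "norm x < pi"
  shows "arg_vec (Wmap x) = x"
proof -
  have "Arg (exp (\<i> * of_real (x $ j))) = x $ j" for j
    using component_le_norm_cart[of x j] assms by (subst Arg_exp) auto
  then show ?thesis
    by (simp add: arg_vec_def Wmap_def vec_eq_iff)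
qed

lemma Im_vec_Wmap: "Im_vec (Wmap x) = (\<chi> j. sin (x $ j))"
  by (simp add: Im_vec_def Wmap_def Im_exp)

lemma norm_Im_vec_le_norm_arg_vec:
  assumes "s \<in> torus"
  shows "norm (Im_vec s) \<le> norm (arg_vec s)"
proof -
  have "\<bar>Im (s $ j)\<bar> \<le> \<bar>Arg (s $ j)\<bar>" for j
  proof -
    have "norm (s $ j) = 1"
      using assms by (simp add: torus_def)
    then have "Im (s $ j) = sin (Arg (s $ j))"
      by (subst sin_Arg) auto
    then show ?thesis
      using abs_sin_x_le_abs_x by simp
  qed
  then show ?thesis
    unfolding norm_vec_def Im_vec_def arg_vec_def by (intro L2_set_mono) auto
qed

lemma norm_Im_vec_Wmap_le: "norm (Im_vec (Wmap x)) \<le> norm x"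
  unfolding norm_vec_def Im_vec_Wmap by (intro L2_set_mono) (auto simp: abs_sin_x_le_abs_x)

lemma abs_sin_minus_le: "\<bar>sin t - t\<bar> \<le> (t::real)\<^sup>2"
proof -
  have "\<bar>sin t - (\<Sum>m<2. sin_coeff m * t ^ m)\<bar> \<le> inverse (fact 2) * \<bar>t\<bar> ^ 2"
    by (rule Maclaurin_sin_bound)
  moreover have "(\<Sum>m<2. sin_coeff m * t ^ m) = t"
    by (simp add: numeral_2_eq_2 sin_coeff_def)
  ultimately have "\<bar>sin t - t\<bar> * 2 \<le> t\<^sup>2"
    by (simp add: power2_abs)
  then show ?thesis
    by (smt (verit) abs_ge_zero)
qed

lemma norm_Im_vec_Wmap_minus_le: "norm (Im_vec (Wmap x) - x) \<le> (norm x)\<^sup>2"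
proof -
  have "norm (Im_vec (Wmap x) - x) = L2_set (\<lambda>j. \<bar>sin (x $ j) - x $ j\<bar>) UNIV"
    by (simp add: norm_vec_def Im_vec_Wmap)
  also have "\<dots> \<le> L2_set (\<lambda>j. (x $ j)\<^sup>2) UNIV"
    by (intro L2_set_mono abs_sin_minus_le) simp
  also have "\<dots> \<le> (\<Sum>j\<in>UNIV. (x $ j)\<^sup>2)"
    by (rule L2_set_le_sum) simp
  also have "\<dots> = (norm x)\<^sup>2"
    by (simp add: norm_vec_def L2_set_def sum_nonneg)
  finally show ?thesis .
qed

lemma abs_inner_square_diff_le:
  fixes p x y :: "'a::real_inner"
  assumes "norm y \<le> norm x" and "norm (y - x) \<le> (norm x)\<^sup>2"
  shows "\<bar>(p \<bullet> y)\<^sup>2 - (p \<bullet> x)\<^sup>2\<bar> \<le> 2 * (norm p)\<^sup>2 * norm x ^ 3"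
proof -
  have "\<bar>(p \<bullet> y)\<^sup>2 - (p \<bullet> x)\<^sup>2\<bar> = \<bar>p \<bullet> (y - x)\<bar> * \<bar>p \<bullet> (y + x)\<bar>"
    by (simp add: inner_diff_right inner_add_right power2_eq_square abs_mult[symmetric] algebra_simps)
  also have "\<dots> \<le> (norm p * (norm x)\<^sup>2) * (norm p * (2 * norm x))"
  proof (rule mult_mono)
    show "\<bar>p \<bullet> (y - x)\<bar> \<le> norm p * (norm x)\<^sup>2"
      using Cauchy_Schwarz_ineq2[of p "y - x"] assms(2)
      by (meson mult_left_mono norm_ge_zero order_trans)
    have "norm (y + x) \<le> 2 * norm x"
      using norm_triangle_ineq[of y x] assms(1) by linarith
    then show "\<bar>p \<bullet> (y + x)\<bar> \<le> norm p * (2 * norm x)"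
      using Cauchy_Schwarz_ineq2[of p "y + x"] by (meson mult_left_mono norm_ge_zero order_trans)
  qed auto
  also have "\<dots> = 2 * (norm p)\<^sup>2 * norm x ^ 3"
    by (simp add: power2_eq_square power3_eq_cube)
  finally show ?thesis .
qed

section \<open>Transport of the measures\<close>

lemma sets_eq_borel_if_M_away_UNIV: "M_away UNIV c M \<Longrightarrow> sets M = sets borel"
  by (simp add: M_away_def sets_restrict_UNIV)

lemma M_away_distr:
  fixes f :: "'a::metric_space \<Rightarrow> 'b::metric_space"
  assumes M: "M_away UNIV c M" and f: "f \<in> borel \<rightarrow>\<^sub>M restrict_space borel T"
    and dist_f: "\<And>x. dist (f x) c' \<le> dist x c"
  shows "M_away T c' (distr M (restrict_space borel T) f)"
  unfolding M_away_def
proof (intro conjI ballI impI)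
  have f_M: "f \<in> M \<rightarrow>\<^sub>M restrict_space borel T"
    using f by (simp add: measurable_cong_sets[OF sets_eq_borel_if_M_away_UNIV[OF M]])
  fix A
  assume A: "A \<in> sets (distr M (restrict_space borel T) f)" and "bounded_away A c'"
  then obtain \<epsilon> where "\<epsilon> > 0" "\<forall>y\<in>A. \<epsilon> \<le> dist y c'"
    by (auto simp: bounded_away_def)
  then have "bounded_away (f -` A \<inter> space M) c"
    unfolding bounded_away_def using dist_f order_trans by blast
  moreover have "f -` A \<inter> space M \<in> sets M"
    using f_M A by (simp add: measurable_sets)
  ultimately have "emeasure M (f -` A \<inter> space M) < \<infinity>"
    using M by (simp add: M_away_def)
  then show "emeasure (distr M (restrict_space borel T) f) A < \<infinity>"
    using A f_M by (simp add: emeasure_distr)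
qed simp

lemma M_away_density_indicator:
  assumes N: "M_away T c N" and S: "S \<in> sets N"
  shows "M_away T c (density N (indicator S))"
  unfolding M_away_def
proof (intro conjI ballI impI)
  fix A
  assume A: "A \<in> sets (density N (indicator S))" and "bounded_away A c"
  then have "emeasure N A < \<infinity>"
    using N by (simp add: M_away_def)
  moreover have "emeasure N (S \<inter> A) \<le> emeasure N A"
    using A by (intro emeasure_mono) auto
  ultimately show "emeasure (density N (indicator S)) A < \<infinity>"
    using A S by (simp add: emeasure_restricted)
qed (use N in \<open>simp add: M_away_def\<close>)

lemma M_away_density_remove_point:
  fixes N :: "'a::metric_space measure"
  assumes N: "M_away T c N" and "c \<in> T"
  shows "M_away T c (density N (indicator (T - {c})))"
    and "emeasure (density N (indicator (T - {c}))) {c} = 0"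
proof -
  have T_Int: "T \<inter> A \<in> sets N" if "A \<in> sets borel" for A
    using N that by (simp add: M_away_def sets_restrict_space)
  have "T - {c} \<in> sets N"
    using T_Int[of "- {c}"] by (simp add: Diff_eq)
  moreover have "{c} \<in> sets N"
    using T_Int[of "{c}"] \<open>c \<in> T\<close> by (simp add: Int_absorb1)
  ultimately show "M_away T c (density N (indicator (T - {c})))"
    and "emeasure (density N (indicator (T - {c}))) {c} = 0"
    using N by (auto simp: M_away_density_indicator emeasure_restricted)
qed

lemma weak_conv_away_distr:
  fixes f :: "'a::metric_space \<Rightarrow> 'b::metric_space"
  assumes sets_Ms: "\<forall>n. sets (Ms n) = sets borel" and sets_M: "sets M = sets borel"
    and conv: "weak_conv_away UNIV c Ms M"
    and f: "continuous_on UNIV f" "range f \<subseteq> T" and dist_f: "\<And>x. dist (f x) c' \<le> dist x c"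
  shows "weak_conv_away T c' (\<lambda>n. distr (Ms n) (restrict_space borel T) f)
           (distr M (restrict_space borel T) f)"
  unfolding weak_conv_away_def
proof (intro allI impI)
  fix g :: "'b \<Rightarrow> real"
  assume g: "continuous_on T g" "bounded (g ` T)" "\<exists>\<epsilon>>0. \<forall>y\<in>T. dist y c' < \<epsilon> \<longrightarrow> g y = 0"
  have f_meas: "f \<in> N \<rightarrow>\<^sub>M restrict_space borel T" if "sets N = sets borel" for N :: "'a measure"
    using f that by (auto intro!: measurable_restrict_space2 borel_measurable_continuous_onI
        simp: measurable_cong_sets[OF that])
  have g_meas: "g \<in> borel_measurable (restrict_space borel T)"
    by (rule borel_measurable_continuous_on_restrict[OF g(1)])
  have "continuous_on UNIV (g \<circ> f)"
    using continuous_on_compose2[OF g(1) f(1,2)] by (simp add: comp_def)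
  moreover have "bounded ((g \<circ> f) ` UNIV)"
    using f(2) by (auto intro: bounded_subset[OF g(2)])
  moreover have "\<exists>\<epsilon>>0. \<forall>x\<in>UNIV. dist x c < \<epsilon> \<longrightarrow> (g \<circ> f) x = 0"
  proof -
    obtain \<epsilon> where "\<epsilon> > 0" "\<forall>y\<in>T. dist y c' < \<epsilon> \<longrightarrow> g y = 0"
      using g(3) by blast
    then show ?thesis
      using f(2) dist_f by (metis comp_apply le_less_trans range_subsetD)
  qed
  ultimately have "(\<lambda>n. \<integral>x. g (f x) \<partial>Ms n) \<longlonglongrightarrow> (\<integral>x. g (f x) \<partial>M)"
    using conv unfolding weak_conv_away_def comp_def by blast
  then show "(\<lambda>n. \<integral>y. g y \<partial>distr (Ms n) (restrict_space borel T) f)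
      \<longlonglongrightarrow> (\<integral>y. g y \<partial>distr M (restrict_space borel T) f)"
    using sets_Ms sets_M by (simp add: integral_distr[OF f_meas g_meas])
qed

lemma weak_conv_away_density_remove_point:
  assumes conv: "weak_conv_away T c Ms M" and sets_M: "sets M = sets (restrict_space borel T)"
  shows "weak_conv_away T c Ms (density M (indicator (T - {c})))"
  unfolding weak_conv_away_def
proof (intro allI impI)
  fix g :: "'a \<Rightarrow> real"
  assume g: "continuous_on T g" "bounded (g ` T)" "\<exists>\<epsilon>>0. \<forall>y\<in>T. dist y c < \<epsilon> \<longrightarrow> g y = 0"
  then have g_c: "c \<in> T \<Longrightarrow> g c = 0"
    by (metis dist_self)
  have g_meas: "g \<in> borel_measurable M"
    using borel_measurable_continuous_on_restrict[OF g(1)] by (simp add: measurable_cong_sets[OF sets_M])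
  have "T - {c} = T \<inter> (UNIV - {c})"
    by blast
  then have "T - {c} \<in> sets M"
    by (simp add: sets_M sets_restrict_space)
  then have "(\<integral>y. g y \<partial>density M (indicator (T - {c}))) = (\<integral>y. indicator (T - {c}) y *\<^sub>R g y \<partial>M)"
    using g_meas by (subst integral_density[symmetric]) (auto simp: ennreal_indicator)
  also have "\<dots> = (\<integral>y. g y \<partial>M)"
    using g_c sets_eq_imp_space_eq[OF sets_M]
    by (intro Bochner_Integration.integral_cong) (auto simp: indicator_def space_restrict_space)
  finally show "(\<lambda>n. \<integral>y. g y \<partial>Ms n) \<longlonglongrightarrow> (\<integral>y. g y \<partial>density M (indicator (T - {c})))"
    using conv g unfolding weak_conv_away_def by simp
qed

lemma M_away_closed_bounded_away_finite:
  assumes "M_away UNIV c M" and "closed A" and "bounded_away A c"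
  shows "emeasure M A < \<infinity>"
  using assms borel_closed[of A] by (simp add: M_away_def sets_restrict_UNIV)

lemma M_away_integrable_if_vanishes_near:
  fixes f :: "'a::metric_space \<Rightarrow> real"
  assumes M: "M_away UNIV c M" and f: "f \<in> borel_measurable borel" and "0 < r"
    and vanish: "\<And>x. dist x c < r \<Longrightarrow> f x = 0" and bound: "\<And>x. \<bar>f x\<bar> \<le> B"
  shows "integrable M f"
proof -
  let ?A = "{x. r \<le> dist x c}"
  have sets_M: "sets M = sets borel"
    using M by (rule sets_eq_borel_if_M_away_UNIV)
  have "closed ?A"
    by (intro closed_Collect_le continuous_intros)
  moreover have "bounded_away ?A c"
    unfolding bounded_away_def using \<open>0 < r\<close> by blast
  ultimately have "integrable M (\<lambda>x. B * indicator ?A x)"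
    using M sets_M borel_closed by (auto intro!: M_away_closed_bounded_away_finite)
  moreover have "f \<in> borel_measurable M"
    using f by (simp add: measurable_cong_sets[OF sets_M])
  moreover have "norm (f x) \<le> norm (B * indicator ?A x)" for x
    using vanish[of x] bound[of x] by (cases "r \<le> dist x c") auto
  ultimately show ?thesis
    by (blast intro: Bochner_Integration.integrable_bound)
qed

lemma weak_conv_away_eventually_emeasure_bounded:
  fixes Ms :: "nat \<Rightarrow> 'a::metric_space measure"
  assumes Ms: "\<forall>n. M_away UNIV c (Ms n)" and conv: "weak_conv_away UNIV c Ms M" and r: "0 < r"
  shows "\<exists>K. \<forall>\<^sub>F n in sequentially. emeasure (Ms n) {x. r \<le> dist x c} \<le> ennreal K"
proof -
  define \<phi> where "\<phi> x = min 1 (max 0 (2 * dist x c / r - 1))" for x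
  have \<phi>_cont: "continuous_on UNIV \<phi>"
    unfolding \<phi>_def by (intro continuous_intros) (use r in auto)
  have \<phi>_bounds: "0 \<le> \<phi> x" "\<phi> x \<le> 1" for x
    by (simp_all add: \<phi>_def)
  have \<phi>_vanish: "dist x c < r / 2 \<Longrightarrow> \<phi> x = 0" for x
    using r by (simp add: \<phi>_def field_simps)
  have indicator_le_\<phi>: "indicator {x. r \<le> dist x c} x \<le> \<phi> x" for x
    using r by (auto simp: \<phi>_def indicator_def field_simps)
  have "bounded (\<phi> ` UNIV)"
    by (rule bounded_subset[of "cball 0 1"]) (auto simp: \<phi>_def)
  moreover have "\<exists>\<epsilon>>0. \<forall>x\<in>UNIV. dist x c < \<epsilon> \<longrightarrow> \<phi> x = 0"
    using r \<phi>_vanish by (intro exI[of _ "r / 2"]) auto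
  ultimately have "(\<lambda>n. \<integral>x. \<phi> x \<partial>Ms n) \<longlonglongrightarrow> (\<integral>x. \<phi> x \<partial>M)"
    using conv \<phi>_cont unfolding weak_conv_away_def by blast
  then have "\<forall>\<^sub>F n in sequentially. (\<integral>x. \<phi> x \<partial>Ms n) < (\<integral>x. \<phi> x \<partial>M) + 1"
    by (rule order_tendstoD) simp
  then have "\<forall>\<^sub>F n in sequentially. emeasure (Ms n) {x. r \<le> dist x c} \<le> ennreal ((\<integral>x. \<phi> x \<partial>M) + 1)"
  proof eventually_elim
    case (elim n)
    have sets_Ms: "sets (Ms n) = sets borel"
      using Ms sets_eq_borel_if_M_away_UNIV by blast
    have "integrable (Ms n) \<phi>"
      using Ms r \<phi>_vanish \<phi>_bounds
      by (intro M_away_integrable_if_vanishes_near[where r="r / 2" and B=1]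
          borel_measurable_continuous_onI \<phi>_cont) auto
    have "closed {x. r \<le> dist x c}"
      by (intro closed_Collect_le continuous_intros)
    then have "emeasure (Ms n) {x. r \<le> dist x c} = (\<integral>\<^sup>+x. indicator {x. r \<le> dist x c} x \<partial>Ms n)"
      using sets_Ms by simp
    also have "\<dots> \<le> (\<integral>\<^sup>+x. ennreal (\<phi> x) \<partial>Ms n)"
      using indicator_le_\<phi> by (intro nn_integral_mono) (simp add: ennreal_indicator[symmetric] ennreal_leI)
    also have "\<dots> = ennreal (\<integral>x. \<phi> x \<partial>Ms n)"
      using \<open>integrable (Ms n) \<phi>\<close> \<phi>_bounds by (intro nn_integral_eq_integral) auto
    also have "\<dots> \<le> ennreal ((\<integral>x. \<phi> x \<partial>M) + 1)"
      using elim by (intro ennreal_leI) simp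
    finally show ?case .
  qed
  then show ?thesis
    by blast
qed

section \<open>The quadratic-form condition\<close>

definition moment_tail_weight :: "real \<Rightarrow> real \<Rightarrow> 'a::real_normed_vector \<Rightarrow> real" where
  "moment_tail_weight d r x = indicator (ball 0 d) x * (norm x)\<^sup>2 + indicator {x. r \<le> norm x} x"

lemma moment_tail_weight_nonneg: "0 \<le> moment_tail_weight d r x"
  by (simp add: moment_tail_weight_def)

lemma moment_tail_weight_mono: "e \<le> d \<Longrightarrow> moment_tail_weight e r x \<le> moment_tail_weight d r x"
  by (auto simp: moment_tail_weight_def indicator_def)

lemma borel_measurable_moment_tail_weight [measurable]:
  "moment_tail_weight d r \<in> borel_measurable (borel :: 'a::real_normed_vector measure)"
proof -
  have closed: "closed {x::'a. r \<le> norm x}"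
    by (intro closed_Collect_le continuous_intros)
  show ?thesis
    unfolding moment_tail_weight_def
    by (intro borel_measurable_add borel_measurable_times borel_measurable_indicator borel_closed[OF closed]
        borel_measurable_continuous_onI continuous_intros) simp
qed

lemma abs_quadratic_Wmap_diff_le:
  fixes p x :: "real^'d"
  assumes e: "0 < e" "e \<le> 1"
  shows "\<bar>(p \<bullet> Im_vec (Wmap x))\<^sup>2 * indicator {s\<in>torus. norm (arg_vec s) < e} (Wmap x)
            - (p \<bullet> x)\<^sup>2 * indicator (ball 0 e) x\<bar>
         \<le> e * (2 * (norm p)\<^sup>2) * moment_tail_weight e pi x"
    (is "\<bar>?B - ?A\<bar> \<le> e * ?c * ?h")
proof (cases "norm x < e")
  case True
  then have "arg_vec (Wmap x) = x"
    using e pi_gt3 by (intro arg_vec_Wmap) auto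
  then have "\<bar>?B - ?A\<bar> = \<bar>(p \<bullet> Im_vec (Wmap x))\<^sup>2 - (p \<bullet> x)\<^sup>2\<bar>"
    using True by (simp add: Wmap_in_torus)
  also have "\<dots> \<le> ?c * norm x ^ 3"
    by (intro abs_inner_square_diff_le norm_Im_vec_Wmap_le norm_Im_vec_Wmap_minus_le)
  also have "\<dots> \<le> ?c * (e * (norm x)\<^sup>2)"
    using mult_right_mono[of "norm x" e "(norm x)\<^sup>2"] True
    by (intro mult_left_mono) (auto simp: power2_eq_square power3_eq_cube)
  also have "\<dots> \<le> e * ?c * ?h"
    using True e by (simp add: moment_tail_weight_def algebra_simps)
  finally show ?thesis .
next
  case False
  show ?thesis
  proof (cases "norm (arg_vec (Wmap x)) < e")
    case True
    \<comment> \<open>\<open>x\<close> is far from 0 but \<open>Wmap x\<close> is near \<open>one_t\<close>: \<open>x\<close> is near a nonzero point of \<open>2 pi \<int>^d\<close>\<close>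
    have "pi \<le> norm x"
      using arg_vec_Wmap[of x] True False by force
    have "\<bar>p \<bullet> Im_vec (Wmap x)\<bar> \<le> norm p * e"
      using Cauchy_Schwarz_ineq2[of p "Im_vec (Wmap x)"] True
        norm_Im_vec_le_norm_arg_vec[OF Wmap_in_torus, of x]
      by (meson less_imp_le mult_left_mono norm_ge_zero order_trans)
    then have "(p \<bullet> Im_vec (Wmap x))\<^sup>2 \<le> (norm p * e)\<^sup>2"
      by (metis abs_ge_zero power2_abs power_mono)
    also have "\<dots> = e * (e * (norm p)\<^sup>2)"
      by (simp add: power2_eq_square)
    also have "\<dots> \<le> e * ?c"
      using e by (intro mult_left_mono mult_right_mono) auto
    finally show ?thesis
      using True False \<open>pi \<le> norm x\<close> by (simp add: Wmap_in_torus moment_tail_weight_def)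
  next
    case False
    then show ?thesis
      using \<open>\<not> norm x < e\<close> e by (simp add: moment_tail_weight_def)
  qed
qed

lemma quad_limit_eventually_bounded:
  assumes "quad_limit g U Ms q"
  shows "\<forall>\<^sub>F \<epsilon> in at_right 0. \<forall>\<^sub>F n in sequentially.
           (\<integral>\<^sup>+x\<in>U \<epsilon>. ennreal (g x) \<partial>Ms n) < ennreal (q + 1)"
proof -
  have lim: "((\<lambda>\<epsilon>. limsup (\<lambda>n. \<integral>\<^sup>+x\<in>U \<epsilon>. ennreal (g x) \<partial>Ms n)) \<longlongrightarrow> ennreal q) (at_right 0)"
    and "0 \<le> q"
    using assms by (auto simp: quad_limit_def)
  then have "ennreal q < ennreal (q + 1)"
    by (intro ennreal_lessI) auto
  from order_tendstoD(2)[OF lim this] show ?thesis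
    by (rule eventually_mono) (rule Limsup_lessD)
qed

lemma set_nn_integral_norm_square_eq_sum_Basis:
  fixes M :: "'a::euclidean_space measure"
  assumes sets_M: "sets M = sets borel" and [measurable]: "A \<in> sets borel"
  shows "(\<integral>\<^sup>+x\<in>A. ennreal ((norm x)\<^sup>2) \<partial>M) = (\<Sum>b\<in>Basis. \<integral>\<^sup>+x\<in>A. ennreal ((b \<bullet> x)\<^sup>2) \<partial>M)"
proof -
  have "(norm x)\<^sup>2 = (\<Sum>b\<in>Basis. (b \<bullet> x)\<^sup>2)" for x :: 'a
    unfolding power2_norm_eq_inner euclidean_inner[of x x] by (simp add: inner_commute power2_eq_square)
  then have "(\<integral>\<^sup>+x\<in>A. ennreal ((norm x)\<^sup>2) \<partial>M) = (\<integral>\<^sup>+x. (\<Sum>b\<in>Basis. ennreal ((b \<bullet> x)\<^sup>2) * indicator A x) \<partial>M)"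
    by (simp add: sum_distrib_right[symmetric])
  also have "\<dots> = (\<Sum>b\<in>Basis. \<integral>\<^sup>+x\<in>A. ennreal ((b \<bullet> x)\<^sup>2) \<partial>M)"
    by (intro nn_integral_sum) (simp add: measurable_cong_sets[OF sets_M refl])
  finally show ?thesis .
qed

lemma quad_limit_Basis_imp_second_moment_bounded:
  fixes Ms :: "nat \<Rightarrow> 'a::euclidean_space measure" and Q :: "'a \<Rightarrow> real"
  assumes sets_Ms: "\<forall>n. sets (Ms n) = sets borel"
    and quad: "\<forall>b\<in>Basis. quad_limit (\<lambda>x. (b \<bullet> x)\<^sup>2) (\<lambda>\<epsilon>. ball 0 \<epsilon>) Ms (Q b)"
  shows "\<exists>d>0. \<exists>K. \<forall>\<^sub>F n in sequentially. (\<integral>\<^sup>+x\<in>ball 0 d. ennreal ((norm x)\<^sup>2) \<partial>Ms n) \<le> ennreal K"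
proof -
  let ?I = "\<lambda>b d n. \<integral>\<^sup>+x\<in>ball 0 d. ennreal ((b \<bullet> x)\<^sup>2) \<partial>Ms n"
  have "\<forall>\<^sub>F d in at_right 0. \<forall>b\<in>Basis. \<forall>\<^sub>F n in sequentially. ?I b d n < ennreal (Q b + 1)"
    using quad by (intro eventually_ball_finite ballI quad_limit_eventually_bounded) auto
  then obtain d0 where "d0 > 0"
    and d0: "\<And>d. 0 < d \<Longrightarrow> d < d0 \<Longrightarrow> \<forall>b\<in>Basis. \<forall>\<^sub>F n in sequentially. ?I b d n < ennreal (Q b + 1)"
    unfolding eventually_at_right_field by blast
  define d where "d = d0 / 2"
  have "d > 0" and "\<forall>b\<in>Basis. \<forall>\<^sub>F n in sequentially. ?I b d n < ennreal (Q b + 1)"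
    using \<open>d0 > 0\<close> d0[of d] by (simp_all add: d_def)
  then have "\<forall>\<^sub>F n in sequentially. \<forall>b\<in>Basis. ?I b d n < ennreal (Q b + 1)"
    by (intro eventually_ball_finite) auto
  then have "\<forall>\<^sub>F n in sequentially.
      (\<integral>\<^sup>+x\<in>ball 0 d. ennreal ((norm x)\<^sup>2) \<partial>Ms n) \<le> ennreal (\<Sum>b\<in>Basis. Q b + 1)"
  proof eventually_elim
    case (elim n)
    have "(\<integral>\<^sup>+x\<in>ball 0 d. ennreal ((norm x)\<^sup>2) \<partial>Ms n) = (\<Sum>b\<in>Basis. ?I b d n)"
      using sets_Ms by (intro set_nn_integral_norm_square_eq_sum_Basis) auto
    also have "\<dots> \<le> (\<Sum>b\<in>Basis. ennreal (Q b + 1))"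
      using elim by (intro sum_mono less_imp_le) auto
    also have "\<dots> = ennreal (\<Sum>b\<in>Basis. Q b + 1)"
      using quad by (intro sum_ennreal) (auto simp: quad_limit_def)
    finally show ?case .
  qed
  with \<open>d > 0\<close> show ?thesis
    by blast
qed

lemma moment_tail_weight_eventually_bounded:
  fixes Ms :: "nat \<Rightarrow> 'a::euclidean_space measure" and Q :: "'a \<Rightarrow> real"
  assumes Ms: "\<forall>n. M_away UNIV 0 (Ms n)" and conv: "weak_conv_away UNIV 0 Ms M"
    and quad: "\<forall>b\<in>Basis. quad_limit (\<lambda>x. (b \<bullet> x)\<^sup>2) (\<lambda>\<epsilon>. ball 0 \<epsilon>) Ms (Q b)" and "0 < r"
  shows "\<exists>d>0. \<exists>K. \<forall>\<^sub>F n in sequentially. (\<integral>\<^sup>+x. ennreal (moment_tail_weight d r x) \<partial>Ms n) \<le> ennreal K"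
proof -
  have sets_Ms: "\<forall>n. sets (Ms n) = sets borel"
    using Ms sets_eq_borel_if_M_away_UNIV by blast
  obtain d K1 where "d > 0"
    and K1: "\<forall>\<^sub>F n in sequentially. (\<integral>\<^sup>+x\<in>ball 0 d. ennreal ((norm x)\<^sup>2) \<partial>Ms n) \<le> ennreal K1"
    using quad_limit_Basis_imp_second_moment_bounded[OF sets_Ms quad] by blast
  obtain K2 where K2: "\<forall>\<^sub>F n in sequentially. emeasure (Ms n) {x. r \<le> dist x 0} \<le> ennreal K2"
    using weak_conv_away_eventually_emeasure_bounded[OF Ms conv \<open>0 < r\<close>] by blast
  have "\<forall>\<^sub>F n in sequentially.
      (\<integral>\<^sup>+x. ennreal (moment_tail_weight d r x) \<partial>Ms n) \<le> ennreal (max 0 K1 + max 0 K2)"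
    using K1 K2
  proof eventually_elim
    case (elim n)
    have "closed {x::'a. r \<le> norm x}"
      by (intro closed_Collect_le continuous_intros)
    then have [measurable]: "{x. r \<le> norm x} \<in> sets (Ms n)"
      using sets_Ms borel_closed by blast
    have "(\<lambda>x::'a. ennreal ((norm x)\<^sup>2) * indicator (ball 0 d) x) \<in> borel_measurable borel"
      by measurable simp
    then have [measurable]: "(\<lambda>x. ennreal ((norm x)\<^sup>2) * indicator (ball 0 d) x) \<in> borel_measurable (Ms n)"
      using measurable_cong_sets[OF sets_Ms[rule_format, of n] refl] by blast
    have "(\<integral>\<^sup>+x. ennreal (moment_tail_weight d r x) \<partial>Ms n)
        = (\<integral>\<^sup>+x. ennreal ((norm x)\<^sup>2) * indicator (ball 0 d) x + indicator {x. r \<le> norm x} x \<partial>Ms n)"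
      by (intro nn_integral_cong) (auto simp: moment_tail_weight_def indicator_def)
    also have "\<dots> = (\<integral>\<^sup>+x\<in>ball 0 d. ennreal ((norm x)\<^sup>2) \<partial>Ms n) + emeasure (Ms n) {x. r \<le> dist x 0}"
      by (subst nn_integral_add) auto
    also have "\<dots> \<le> ennreal K1 + ennreal K2"
      using elim by (rule add_mono)
    also have "\<dots> = ennreal (max 0 K1 + max 0 K2)"
      by (simp add: max_def ennreal_neg)
    finally show ?case .
  qed
  with \<open>d > 0\<close> show ?thesis
    by blast
qed

lemma tendsto_at_right_0_if_close:
  fixes a b :: "real \<Rightarrow> ennreal"
  assumes a: "(a \<longlongrightarrow> L) (at_right 0)" and "L \<noteq> \<infinity>"
    and close: "\<forall>\<^sub>F \<epsilon> in at_right 0. b \<epsilon> \<le> a \<epsilon> + ennreal (\<epsilon> * C) \<and> a \<epsilon> \<le> b \<epsilon> + ennreal (\<epsilon> * C)"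
  shows "(b \<longlongrightarrow> L) (at_right 0)"
proof (rule tendsto_sandwich)
  have "((\<lambda>\<epsilon>. ennreal (\<epsilon> * C)) \<longlongrightarrow> ennreal (0 * C)) (at_right 0)"
    by (intro tendsto_ennrealI tendsto_intros)
  then have err: "((\<lambda>\<epsilon>. ennreal (\<epsilon> * C)) \<longlongrightarrow> 0) (at_right 0)"
    by simp
  show "((\<lambda>\<epsilon>. a \<epsilon> - ennreal (\<epsilon> * C)) \<longlongrightarrow> L) (at_right 0)"
    using tendsto_diff_ennreal[OF a err] \<open>L \<noteq> \<infinity>\<close> by simp
  show "((\<lambda>\<epsilon>. a \<epsilon> + ennreal (\<epsilon> * C)) \<longlongrightarrow> L) (at_right 0)"
    using tendsto_add[OF a err] by simp
  show "\<forall>\<^sub>F \<epsilon> in at_right 0. a \<epsilon> - ennreal (\<epsilon> * C) \<le> b \<epsilon>"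
    using close by eventually_elim (simp add: ennreal_minus_le_iff add.commute)
  show "\<forall>\<^sub>F \<epsilon> in at_right 0. b \<epsilon> \<le> a \<epsilon> + ennreal (\<epsilon> * C)"
    using close by eventually_elim simp
qed

lemma Limsup_le_Limsup_add_const:
  fixes f g :: "'a \<Rightarrow> ennreal"
  assumes "F \<noteq> bot" and "\<forall>\<^sub>F x in F. f x \<le> g x + c"
  shows "Limsup F f \<le> Limsup F g + c"
  using Limsup_mono[OF assms(2)] Limsup_const_add[OF assms(1), of c g] by (simp add: add.commute)

lemma Liminf_le_Liminf_add_const:
  fixes f g :: "'a \<Rightarrow> ennreal"
  assumes "F \<noteq> bot" and "\<forall>\<^sub>F x in F. f x \<le> g x + c"
  shows "Liminf F f \<le> Liminf F g + c"
  using Liminf_mono[OF assms(2)] Liminf_add_const[OF assms(1), of g c] by simp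

lemma quad_limit_if_close:
  assumes quad: "quad_limit g U Ms q"
    and close: "\<forall>\<^sub>F \<epsilon> in at_right 0. \<forall>\<^sub>F n in sequentially.
           (\<integral>\<^sup>+x\<in>V \<epsilon>. ennreal (h x) \<partial>Ns n) \<le> (\<integral>\<^sup>+x\<in>U \<epsilon>. ennreal (g x) \<partial>Ms n) + ennreal (\<epsilon> * C) \<and>
           (\<integral>\<^sup>+x\<in>U \<epsilon>. ennreal (g x) \<partial>Ms n) \<le> (\<integral>\<^sup>+x\<in>V \<epsilon>. ennreal (h x) \<partial>Ns n) + ennreal (\<epsilon> * C)"
  shows "quad_limit h V Ns q"
proof -
  define A where "A \<epsilon> n = (\<integral>\<^sup>+x\<in>U \<epsilon>. ennreal (g x) \<partial>Ms n)" for \<epsilon> n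
  define B where "B \<epsilon> n = (\<integral>\<^sup>+x\<in>V \<epsilon>. ennreal (h x) \<partial>Ns n)" for \<epsilon> n
  have close_AB: "\<forall>\<^sub>F \<epsilon> in at_right 0. \<forall>\<^sub>F n in sequentially.
      B \<epsilon> n \<le> A \<epsilon> n + ennreal (\<epsilon> * C) \<and> A \<epsilon> n \<le> B \<epsilon> n + ennreal (\<epsilon> * C)"
    using close by (simp add: A_def B_def)
  have "\<forall>\<^sub>F \<epsilon> in at_right 0.
      limsup (B \<epsilon>) \<le> limsup (A \<epsilon>) + ennreal (\<epsilon> * C) \<and> limsup (A \<epsilon>) \<le> limsup (B \<epsilon>) + ennreal (\<epsilon> * C)"
    using close_AB
    by eventually_elim (auto intro: Limsup_le_Limsup_add_const elim: eventually_mono)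
  moreover have "\<forall>\<^sub>F \<epsilon> in at_right 0.
      liminf (B \<epsilon>) \<le> liminf (A \<epsilon>) + ennreal (\<epsilon> * C) \<and> liminf (A \<epsilon>) \<le> liminf (B \<epsilon>) + ennreal (\<epsilon> * C)"
    using close_AB
    by eventually_elim (auto intro: Liminf_le_Liminf_add_const elim: eventually_mono)
  ultimately show ?thesis
    using quad unfolding quad_limit_def A_def[symmetric] B_def[symmetric]
    by (auto intro: tendsto_at_right_0_if_close)
qed

lemma nn_integral_le_add_if_abs_diff_le:
  fixes f g h :: "'a \<Rightarrow> real"
  assumes diff: "\<And>x. \<bar>f x - g x\<bar> \<le> c * h x" and "0 \<le> c" and g: "\<And>x. 0 \<le> g x" and h: "\<And>x. 0 \<le> h x"
    and [measurable]: "g \<in> borel_measurable M" "h \<in> borel_measurable M"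
  shows "(\<integral>\<^sup>+x. ennreal (f x) \<partial>M) \<le> (\<integral>\<^sup>+x. ennreal (g x) \<partial>M) + ennreal c * (\<integral>\<^sup>+x. ennreal (h x) \<partial>M)"
proof -
  have "(\<integral>\<^sup>+x. ennreal (f x) \<partial>M) \<le> (\<integral>\<^sup>+x. ennreal (g x) + ennreal c * ennreal (h x) \<partial>M)"
  proof (rule nn_integral_mono)
    fix x
    have "f x \<le> g x + c * h x"
      using diff[of x] by linarith
    then have "ennreal (f x) \<le> ennreal (g x + c * h x)"
      by (rule ennreal_leI)
    also have "\<dots> = ennreal (g x) + ennreal c * ennreal (h x)"
      using g[of x] h[of x] \<open>0 \<le> c\<close> by (simp add: ennreal_mult)
    finally show "ennreal (f x) \<le> ennreal (g x) + ennreal c * ennreal (h x)" .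
  qed
  also have "\<dots> = (\<integral>\<^sup>+x. ennreal (g x) \<partial>M) + ennreal c * (\<integral>\<^sup>+x. ennreal (h x) \<partial>M)"
    by (simp add: nn_integral_add nn_integral_cmult)
  finally show ?thesis .
qed

lemma Wmap_quadratic_integrals_close:
  fixes M :: "(real^'d) measure" and p :: "real^'d"
  assumes sets_M: "sets M = sets borel" and \<epsilon>: "0 < \<epsilon>" "\<epsilon> \<le> d" "\<epsilon> \<le> 1"
  defines "B \<equiv> \<integral>\<^sup>+s\<in>{s\<in>torus. norm (arg_vec s) < \<epsilon>}. ennreal ((p \<bullet> Im_vec s)\<^sup>2)
                 \<partial>distr M (restrict_space borel torus) Wmap"
    and "A \<equiv> \<integral>\<^sup>+x\<in>ball 0 \<epsilon>. ennreal ((p \<bullet> x)\<^sup>2) \<partial>M"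
    and "H \<equiv> \<integral>\<^sup>+x. ennreal (moment_tail_weight d pi x) \<partial>M"
  shows "B \<le> A + ennreal (\<epsilon> * (2 * (norm p)\<^sup>2)) * H \<and> A \<le> B + ennreal (\<epsilon> * (2 * (norm p)\<^sup>2)) * H"
proof -
  define gB where "gB x = (p \<bullet> Im_vec (Wmap x))\<^sup>2 * indicator {s\<in>torus. norm (arg_vec s) < \<epsilon>} (Wmap x)"
    for x
  define gA where "gA x = (p \<bullet> x)\<^sup>2 * indicator (ball 0 \<epsilon>) x" for x :: "real^'d"
  have meas_M: "f \<in> M \<rightarrow>\<^sub>M N" if "f \<in> borel \<rightarrow>\<^sub>M N" for f :: "real^'d \<Rightarrow> 'b" and N
    using that measurable_cong_sets[OF sets_M refl] by blast
  have [measurable]: "ball (0::real^'d) \<epsilon> \<in> sets borel"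
    by simp
  have [measurable]: "gA \<in> borel_measurable M" "gB \<in> borel_measurable M"
    "moment_tail_weight d pi \<in> borel_measurable M"
    unfolding gA_def gB_def by (intro meas_M; measurable)+
  have diff: "\<bar>gB x - gA x\<bar> \<le> (\<epsilon> * (2 * (norm p)\<^sup>2)) * moment_tail_weight d pi x" for x
    using abs_quadratic_Wmap_diff_le[OF \<epsilon>(1,3), of p x] moment_tail_weight_mono[OF \<epsilon>(2), of pi x] \<epsilon>(1)
    unfolding gA_def gB_def by (smt (verit) mult_left_mono zero_le_mult_iff zero_le_power2)
  have "B = (\<integral>\<^sup>+x. ennreal (gB x) \<partial>M)"
    unfolding B_def
    by (subst nn_integral_distr)
      (auto simp: gB_def ennreal_mult'' ennreal_indicator intro: meas_M Wmap_measurable measurable_restrict_space1)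
  moreover have "A = (\<integral>\<^sup>+x. ennreal (gA x) \<partial>M)"
    unfolding A_def gA_def by (simp add: ennreal_mult'' ennreal_indicator)
  moreover have "0 \<le> gA x" "0 \<le> gB x" for x
    by (simp_all add: gA_def gB_def)
  moreover have "\<bar>gA x - gB x\<bar> \<le> (\<epsilon> * (2 * (norm p)\<^sup>2)) * moment_tail_weight d pi x" for x
    using diff[of x] by (simp add: abs_minus_commute)
  ultimately show ?thesis
    using diff \<epsilon> unfolding H_def
    by (auto intro!: nn_integral_le_add_if_abs_diff_le moment_tail_weight_nonneg)
qed

lemma quad_limit_Wmap:
  fixes Ms :: "nat \<Rightarrow> (real^'d) measure" and p :: "real^'d"
  assumes Ms: "\<forall>n. M_away UNIV 0 (Ms n)" and conv: "weak_conv_away UNIV 0 Ms M"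
    and quad: "\<forall>u. quad_limit (\<lambda>x. (u \<bullet> x)\<^sup>2) (\<lambda>\<epsilon>. ball 0 \<epsilon>) Ms (Q u)"
  shows "quad_limit (\<lambda>s. (p \<bullet> Im_vec s)\<^sup>2) (\<lambda>\<epsilon>. {s\<in>torus. norm (arg_vec s) < \<epsilon>})
           (\<lambda>n. distr (Ms n) (restrict_space borel torus) Wmap) (Q p)"
proof -
  obtain d K where "d > 0"
    and K: "\<forall>\<^sub>F n in sequentially. (\<integral>\<^sup>+x. ennreal (moment_tail_weight d pi x) \<partial>Ms n) \<le> ennreal K"
    using moment_tail_weight_eventually_bounded[OF Ms conv _ pi_gt_zero] quad by blast
  define C where "C = 2 * (norm p)\<^sup>2 * K"
  have "\<forall>\<^sub>F \<epsilon> in at_right 0. 0 < \<epsilon> \<and> \<epsilon> \<le> d \<and> \<epsilon> \<le> 1"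
    unfolding eventually_at_right_field using \<open>d > 0\<close> by (intro exI[of _ "min d 1"]) auto
  then have "\<forall>\<^sub>F \<epsilon> in at_right 0. \<forall>\<^sub>F n in sequentially.
      (\<integral>\<^sup>+s\<in>{s\<in>torus. norm (arg_vec s) < \<epsilon>}. ennreal ((p \<bullet> Im_vec s)\<^sup>2)
          \<partial>distr (Ms n) (restrict_space borel torus) Wmap)
        \<le> (\<integral>\<^sup>+x\<in>ball 0 \<epsilon>. ennreal ((p \<bullet> x)\<^sup>2) \<partial>Ms n) + ennreal (\<epsilon> * C) \<and>
      (\<integral>\<^sup>+x\<in>ball 0 \<epsilon>. ennreal ((p \<bullet> x)\<^sup>2) \<partial>Ms n)
        \<le> (\<integral>\<^sup>+s\<in>{s\<in>torus. norm (arg_vec s) < \<epsilon>}. ennreal ((p \<bullet> Im_vec s)\<^sup>2)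
            \<partial>distr (Ms n) (restrict_space borel torus) Wmap) + ennreal (\<epsilon> * C)"
  proof eventually_elim
    case \<epsilon>: (elim \<epsilon>)
    show ?case
      using K
    proof eventually_elim
      case (elim n)
      have "sets (Ms n) = sets borel"
        using Ms sets_eq_borel_if_M_away_UNIV by blast
      moreover have "ennreal (\<epsilon> * (2 * (norm p)\<^sup>2)) * (\<integral>\<^sup>+x. ennreal (moment_tail_weight d pi x) \<partial>Ms n)
          \<le> ennreal (\<epsilon> * C)"
        using mult_left_mono[OF elim, of "ennreal (\<epsilon> * (2 * (norm p)\<^sup>2))"] \<epsilon>
        by (simp add: C_def ennreal_mult' mult.assoc)
      ultimately show ?case
        using Wmap_quadratic_integrals_close[of "Ms n" \<epsilon> d p] \<epsilon> by (meson add_left_mono order_trans)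
    qed
  qed
  then show ?thesis
    by (rule quad_limit_if_close[OF quad[rule_format, of p]])
qed

theorem proposition4p4:
  fixes \<tau>s :: "nat \<Rightarrow> (real^'d) measure" and \<tau> :: "(real^'d) measure"
    and Q :: "real^'d \<Rightarrow> real"
  assumes "\<forall>n. M_away UNIV 0 (\<tau>s n)"
    and "M_away UNIV 0 \<tau>" and "emeasure \<tau> {0} = 0" and "weak_conv_away UNIV 0 \<tau>s \<tau>"
    and "\<forall>u. quad_limit (\<lambda>x. (u \<bullet> x)^2) (\<lambda>\<epsilon>. ball 0 \<epsilon>) \<tau>s (Q u)"
  defines "\<rho>s \<equiv> \<lambda>n. distr (\<tau>s n) (restrict_space borel torus) Wmap"
    and "\<rho> \<equiv> density (distr \<tau> (restrict_space borel torus) Wmap)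
                 (indicator (torus - {one_t}) :: complex^'d \<Rightarrow> ennreal)"
  shows "(\<forall>n. M_away torus one_t (\<rho>s n)) \<and> M_away torus one_t \<rho> \<and> emeasure \<rho> {one_t} = 0
      \<and> weak_conv_away torus one_t \<rho>s \<rho>
      \<and> (\<forall>p::real^'d. (\<forall>j. p$j \<in> \<int>) \<longrightarrow>
           quad_limit (\<lambda>s. (p \<bullet> Im_vec s)^2) (\<lambda>\<epsilon>. {s\<in>torus. norm (arg_vec s) < \<epsilon>}) \<rho>s (Q p))"
proof -
  have dist_Wmap: "dist (Wmap x) one_t \<le> dist x 0" for x :: "real^'d"
    by (simp add: dist_Wmap_one_t_le)
  have "\<forall>n. M_away torus one_t (\<rho>s n)"
    using assms(1) Wmap_measurable dist_Wmap unfolding \<rho>s_def by (blast intro: M_away_distr)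
  moreover have "M_away torus one_t \<rho>" and "emeasure \<rho> {one_t} = 0"
    unfolding \<rho>_def using M_away_distr[OF assms(2) Wmap_measurable dist_Wmap] one_t_in_torus
    by (rule M_away_density_remove_point)+
  moreover have "weak_conv_away torus one_t \<rho>s \<rho>"
    unfolding \<rho>s_def \<rho>_def
    using assms(1,2,4) sets_eq_borel_if_M_away_UNIV continuous_on_Wmap Wmap_in_torus dist_Wmap
    by (intro weak_conv_away_density_remove_point weak_conv_away_distr) auto
  moreover have "quad_limit (\<lambda>s. (p \<bullet> Im_vec s)^2) (\<lambda>\<epsilon>. {s\<in>torus. norm (arg_vec s) < \<epsilon>}) \<rho>s (Q p)" for p
    unfolding \<rho>s_def using assms(1,4,5) by (rule quad_limit_Wmap)
  ultimately show ?thesis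
    by blast
qed

end
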